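(* Let $M=\begin{pmatrix}a&b\\c&d\end{pmatrix}\in\mathrm{Mat}(2,\mathbb{Z})$ with $\mathrm{mgcd}(M)=r\neq0$. Then for all integers $n\ge2$, the reduction of $M$ mod $n$ is $\mathrm{Mat}(2,\mathbb{Z}_n)^\times$-conjugate to the reduction mod $n$ of the integer matrix $\begin{pmatrix}a&bc/r\\ r&d\end{pmatrix}$.
   Context: $\mathrm{mgcd}(M)=\gcd(b,c,d-a)\ge0$. $\mathbb{Z}_n=\mathbb{Z}/n\mathbb{Z}$ and $\mathrm{Mat}(2,\mathbb{Z}_n)^\times$ is the group of invertible $2\times2$ matrices over $\mathbb{Z}_n$. *)

theory Defs
  imports "HOL-Analysis.Analysis" "HOL-Number_Theory.Cong"
begin

text \<open>Integer 2x2 matrices are elements of type int^2^2; row i, column j is A$i$j.\<close>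

definition mat2 :: "int \<Rightarrow> int \<Rightarrow> int \<Rightarrow> int \<Rightarrow> int^2^2" where
  "mat2 a b c d = (\<chi> i j. if i = 1 then (if j = 1 then a else b) else (if j = 1 then c else d))"

definition mgcd :: "int^2^2 \<Rightarrow> int" where
  "mgcd M = gcd (M$1$2) (gcd (M$2$1) (M$2$2 - M$1$1))"

definition mat_cong :: "int \<Rightarrow> int^2^2 \<Rightarrow> int^2^2 \<Rightarrow> bool" where
  "mat_cong n A B \<longleftrightarrow> (\<forall>i j. [A$i$j = B$i$j] (mod n))"

text \<open>Reductions mod n of A and B are conjugate by an element of Mat(2,Z_n)^x:
  there are integer lifts P, Q of a unit and its inverse with P A Q = B mod n.\<close>
definition conj_mod :: "int \<Rightarrow> int^2^2 \<Rightarrow> int^2^2 \<Rightarrow> bool" where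
  "conj_mod n A B \<longleftrightarrow> (\<exists>P Q :: int^2^2.
      mat_cong n (P ** Q) (mat 1) \<and> mat_cong n (Q ** P) (mat 1) \<and>
      mat_cong n (P ** A ** Q) B)"

end

theory Submission
  imports Defs "HOL-Computational_Algebra.Primes"
begin

text \<open>Write \<open>M = a I + r N\<close> with \<open>N = [[0, b/r], [c/r, (d-a)/r]]\<close>; the entries of \<open>N\<close>
  are coprime. Conjugating \<open>M\<close> amounts to conjugating \<open>N\<close>, and \<open>N\<close> is conjugate to its
  companion matrix \<open>[[0, -det N], [1, tr N]]\<close> by \<open>Q = [v | N v]\<close> as soon as \<open>det Q\<close> is a unit
  mod \<open>n\<close>. Now \<open>det [v | N v]\<close> is a primitive binary quadratic form in \<open>v\<close>, and a primitive
  form takes values coprime to any given \<open>n\<close> (avoid each prime factor of \<open>n\<close> separately and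
  glue the solutions by the Chinese remainder theorem).\<close>

definition binary_form :: "int \<Rightarrow> int \<Rightarrow> int \<Rightarrow> int \<Rightarrow> int \<Rightarrow> int" where
  "binary_form A B C x y = A * x\<^sup>2 + B * x * y + C * y\<^sup>2"

lemma binary_form_cong:
  "[x = x'] (mod m) \<Longrightarrow> [y = y'] (mod m) \<Longrightarrow>
    [binary_form A B C x y = binary_form A B C x' y'] (mod m)"
  unfolding binary_form_def by (intro cong_add cong_mult cong_pow cong_refl)

lemma primitive_binary_form_not_dvd:
  assumes "prime p" and "gcd A (gcd B C) = 1"
  shows "\<exists>x y. \<not> p dvd binary_form A B C x y"
proof (rule ccontr)
  assume "\<not> ?thesis"
  then have "p dvd binary_form A B C 1 0" "p dvd binary_form A B C 0 1"
    "p dvd binary_form A B C 1 1" by blast+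
  then have "p dvd A" "p dvd C" "p dvd B"
    by (simp_all add: binary_form_def dvd_add_right_iff dvd_add_left_iff)
  then have "p dvd gcd A (gcd B C)" by simp
  with assms show False by (simp add: prime_int_iff)
qed

lemma binary_form_coprime_prime_mult:
  assumes "prime p"
    and "coprime (binary_form A B C x y) m"
    and "\<not> p dvd binary_form A B C x' y'"
  shows "\<exists>x y. coprime (binary_form A B C x y) (p * m)"
proof (cases "p dvd binary_form A B C x y")
  case False
  then have "coprime (binary_form A B C x y) p"
    using assms(1) by (simp add: prime_imp_coprime coprime_commute)
  with assms(2) show ?thesis by auto
next
  case True
  with assms(1,2) have "coprime p m"
    by (metis coprime_common_divisor not_prime_unit prime_imp_coprime)
  then obtain u where u: "[u = x'] (mod p)" "[u = x] (mod m)"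
    using binary_chinese_remainder_int by blast
  obtain v where v: "[v = y'] (mod p)" "[v = y] (mod m)"
    using \<open>coprime p m\<close> binary_chinese_remainder_int by blast
  have "\<not> p dvd binary_form A B C u v"
    using binary_form_cong[OF u(1) v(1)] assms(3) cong_dvd_iff by blast
  then have "coprime (binary_form A B C u v) p"
    using assms(1) by (simp add: prime_imp_coprime coprime_commute)
  moreover have "coprime (binary_form A B C u v) m"
    using binary_form_cong[OF u(2) v(2)] assms(2) by (metis cong_imp_coprime cong_sym)
  ultimately show ?thesis by auto
qed

lemma primitive_binary_form_coprime:
  fixes n :: int
  assumes "gcd A (gcd B C) = 1" and "n > 0"
  shows "\<exists>x y. coprime (binary_form A B C x y) n"
  using assms(2)
proof (induction "nat n" arbitrary: n rule: less_induct)
  case less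
  show ?case
  proof (cases "n = 1")
    case True
    then show ?thesis by simp
  next
    case False
    with less.prems obtain p where p: "prime p" "p dvd n"
      using prime_factor_int by (metis abs_of_pos)
    then obtain m where n: "n = p * m" by blast
    have "m > 0" using less.prems n p(1) prime_gt_0_int zero_less_mult_pos by blast
    moreover have "nat m < nat n"
      using n \<open>m > 0\<close> prime_gt_1_int[OF p(1)] by simp
    ultimately obtain x y where "coprime (binary_form A B C x y) m"
      using less.hyps by blast
    with p(1) show ?thesis
      using primitive_binary_form_not_dvd[OF p(1) assms(1)] binary_form_coprime_prime_mult
      unfolding n by blast
  qed
qed

lemma mat2_mult:
  "mat2 a b c d ** mat2 e f g h = mat2 (a*e + b*g) (a*f + b*h) (c*e + d*g) (c*f + d*h)"
  unfolding mat2_def matrix_matrix_mult_def by (simp add: vec_eq_iff forall_2 sum_2)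

lemma mat2_eq_iff:
  "mat2 a b c d = mat2 a' b' c' d' \<longleftrightarrow> a = a' \<and> b = b' \<and> c = c' \<and> d = d'"
  unfolding mat2_def by (simp add: vec_eq_iff forall_2)

lemma mat_one_eq_mat2: "(mat 1 :: int^2^2) = mat2 1 0 0 1"
  unfolding mat2_def mat_def by (simp add: vec_eq_iff forall_2)

lemma mat_cong_mat2_iff:
  "mat_cong n (mat2 a b c d) (mat2 a' b' c' d') \<longleftrightarrow>
    [a = a'] (mod n) \<and> [b = b'] (mod n) \<and> [c = c'] (mod n) \<and> [d = d'] (mod n)"
  unfolding mat_cong_def mat2_def by (simp add: forall_2)

lemma mat_cong_scalar_unit:
  assumes "[k = 1] (mod n)"
  shows "mat_cong n (mat2 k 0 0 k ** B) B"
proof -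
  have "[k * t = t] (mod n)" for t
    using cong_mult[OF assms cong_refl[of t]] by simp
  then show ?thesis
    unfolding mat_cong_def mat2_def matrix_matrix_mult_def by (simp add: forall_2 sum_2)
qed

text \<open>The adjugate of \<open>Q\<close>, scaled by an inverse of \<open>det Q\<close> mod \<open>n\<close>, inverts \<open>Q\<close> mod \<open>n\<close>.\<close>

lemma conj_mod_if_intertwined:
  fixes A B :: "int^2^2"
  assumes AQ: "A ** mat2 e f g h = mat2 e f g h ** B" and "coprime (e*h - f*g) n"
  shows "conj_mod n A B"
proof -
  define Q where "Q = mat2 e f g h"
  obtain s where s: "[(e*h - f*g) * s = 1] (mod n)"
    using cong_solve_coprime_int \<open>coprime (e*h - f*g) n\<close> by blast
  define k where "k = (e*h - f*g) * s"
  define P where "P = mat2 (s*h) (-s*f) (-s*g) (s*e)"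
  have PQ: "P ** Q = mat2 k 0 0 k" and QP: "Q ** P = mat2 k 0 0 k"
    unfolding P_def Q_def k_def mat2_mult mat2_eq_iff by (simp_all add: algebra_simps)
  have "P ** A ** Q = P ** (A ** Q)"
    by (simp add: matrix_mul_assoc)
  also have "\<dots> = (P ** Q) ** B"
    using AQ unfolding Q_def by (simp add: matrix_mul_assoc)
  also have "\<dots> = mat2 k 0 0 k ** B"
    by (simp add: PQ)
  finally have "P ** A ** Q = mat2 k 0 0 k ** B" .
  moreover have "mat_cong n (mat2 k 0 0 k) (mat 1)"
    using s unfolding k_def mat_one_eq_mat2 mat_cong_mat2_iff by (simp add: cong_refl)
  ultimately show ?thesis
    unfolding conj_mod_def using PQ QP mat_cong_scalar_unit[OF s[folded k_def]] by metis
qed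

lemma mgcd_mat2_decompose:
  assumes "r = mgcd (mat2 a b c d)" and "r \<noteq> 0"
  obtains b' c' e where "b = r * b'" "c = r * c'" "d = a + r * e" "gcd b' (gcd c' e) = 1"
proof -
  have r: "r = gcd b (gcd c (d - a))"
    using assms(1) unfolding mgcd_def mat2_def by simp
  obtain b' c' e where "b = r * b'" "c = r * c'" "d - a = r * e"
    unfolding r by (meson dvd_def dvd_trans gcd_dvd1 gcd_dvd2)
  moreover have "gcd b' (gcd c' e) = 1"
  proof -
    have "r > 0" using r assms(2) by (metis gcd_ge_0_int order_le_less)
    have "r = gcd (r * b') (gcd (r * c') (r * e))"
      using r \<open>b = r * b'\<close> \<open>c = r * c'\<close> \<open>d - a = r * e\<close> by simp
    also have "\<dots> = r * gcd b' (gcd c' e)"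
      using \<open>r > 0\<close> by (simp add: gcd_mult_left)
    finally show ?thesis using \<open>r > 0\<close> by simp
  qed
  ultimately show ?thesis using that[of b' c' e] by (simp add: algebra_simps)
qed

theorem proposition37:
  fixes a b c d r :: int
  assumes "r = mgcd (mat2 a b c d)" and "r \<noteq> 0"
  shows "\<forall>n::int. n \<ge> 2 \<longrightarrow> conj_mod n (mat2 a b c d) (mat2 a (b * c div r) r d)"
proof (intro allI impI)
  fix n :: int
  assume "n \<ge> 2"
  obtain b' c' e where bcd: "b = r * b'" "c = r * c'" "d = a + r * e"
    and primitive: "gcd b' (gcd c' e) = 1"
    using mgcd_mat2_decompose[OF assms] .
  have "gcd c' (gcd e (- b')) = 1"
    using primitive by (metis gcd.commute gcd.left_commute gcd_neg2_int)
  then obtain x y where "coprime (binary_form c' e (- b') x y) n"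
    using primitive_binary_form_coprime \<open>n \<ge> 2\<close> by fastforce
  then have "coprime (x * (c'*x + e*y) - b'*y * y) n"
    by (simp add: binary_form_def power2_eq_square algebra_simps)
  moreover have "b * c div r = r * (b' * c')"
    using bcd \<open>r \<noteq> 0\<close> by simp
  \<comment> \<open>\<open>Q = [v | N v]\<close> for \<open>v = (x, y)\<close>; the identity is Cayley--Hamilton for \<open>N\<close>\<close>
  moreover have "mat2 a b c d ** mat2 x (b'*y) y (c'*x + e*y)
      = mat2 x (b'*y) y (c'*x + e*y) ** mat2 a (r * (b' * c')) r d"
    unfolding bcd mat2_mult mat2_eq_iff by (simp add: algebra_simps)
  ultimately show "conj_mod n (mat2 a b c d) (mat2 a (b * c div r) r d)"
    using conj_mod_if_intertwined by simp
qed

end
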